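(* Let $I$ be a monomial ideal in $R=K[x_1,\ldots,x_d]$ ($K$ a field), and let $r=\frac{p}{q}$ be a positive rational number with $p,q$ positive integers. Define the bounded convex set $$\mathcal{C}(I,r)=r\cdot \operatorname{np}(I)+\left(d-\tfrac{1}{q}\right)\cdot S_d$$ (Minkowski sum). If $\mathbf{x}^{\mathbf{a}}$ is a minimal monomial generator of $\overline{I^r}$, then $\mathbf{a}\in\mathcal{C}(I,r)$. Moreover, if $\mathbf{a}\in\mathcal{C}(I,r)\cap\mathbb{N}^d$ then $\mathbf{x}^{\mathbf{a}}\in\overline{I^r}$, and consequently $\overline{I^r}=(\{\mathbf{x}^{\mathbf{a}}\mid \mathbf{a}\in\mathcal{C}(I,r)\cap\mathbb{N}^d\})$.
   Context: $\mathbb{N}$ denotes the non-negative integers and $\mathbf{x}^{\mathbf{a}}=x_1^{a_1}\cdots x_d^{a_d}$. For a monomial ideal $I$, $NP(I)$ is the convex hull in $\mathbb{R}^d$ of $\{\mathbf{a}\in\mathbb{N}^d\mid \mathbf{x}^{\mathbf{a}}\in I\}$, and the Newton polytope $\operatorname{np}(I)$ is the convex hull of the exponent vectors of the minimal monomial generators of $I$. For real $r\ge0$, the $r$-th real power is $\overline{I^r}=(\{\mathbf{x}^{\mathbf{a}}\mid \mathbf{a}\in r\cdot NP(I)\cap\mathbb{N}^d\})$, where $r\cdot X=\{r\mathbf{v}\mid\mathbf{v}\in X\}$. $S_d=\{\mathbf{a}\in\mathbb{R}^d\mid a_i\ge0,\ a_1+\cdots+a_d\le1\}$ is the unit simplex.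 The Minkowski sum is $A+B=\{\mathbf{a}+\mathbf{b}\mid \mathbf{a}\in A,\mathbf{b}\in B\}$. *)

theory Defs
  imports "HOL-Analysis.Analysis"
begin

text \<open>Monomials x^a in K[x_1,...,x_d] are identified with exponent vectors
a :: 'n \<Rightarrow> nat, where the finite type 'n indexes the variables (d = CARD('n)).
A monomial ideal is determined by the set of exponents of the monomials it contains;
this set is closed upwards (x^a \<in> I and a \<le> b imply x^b \<in> I).
The order on 'n \<Rightarrow> nat is the pointwise (divisibility) order.\<close>

definition monomial_ideal :: "('n \<Rightarrow> nat) set \<Rightarrow> bool" where
  "monomial_ideal E \<longleftrightarrow> (\<forall>a\<in>E. \<forall>b. a \<le> b \<longrightarrow> b \<in> E)"

definition gen_ideal :: "('n \<Rightarrow> nat) set \<Rightarrow> ('n \<Rightarrow> nat) set" where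
  "gen_ideal S = {b. \<exists>a\<in>S. a \<le> b}"

definition min_gens :: "('n \<Rightarrow> nat) set \<Rightarrow> ('n \<Rightarrow> nat) set" where
  "min_gens E = {a\<in>E. \<forall>b\<in>E. b \<le> a \<longrightarrow> b = a}"

definition emb :: "('n::finite \<Rightarrow> nat) \<Rightarrow> real^'n" where
  "emb a = (\<chi> i. real (a i))"

definition NP :: "('n::finite \<Rightarrow> nat) set \<Rightarrow> (real^'n) set" where
  "NP E = convex hull (emb ` E)"

definition newton_polytope :: "('n::finite \<Rightarrow> nat) set \<Rightarrow> (real^'n) set" where
  "newton_polytope E = convex hull (emb ` min_gens E)"

text \<open>r-th real power \<open>\<bar>I^r\<bar>\<close>.\<close>
definition real_power :: "('n::finite \<Rightarrow> nat) set \<Rightarrow> real \<Rightarrow> ('n \<Rightarrow> nat) set" where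
  "real_power E r = gen_ideal {a. emb a \<in> (\<lambda>v. r *\<^sub>R v) ` NP E}"

definition unit_simplex :: "(real^'n::finite) set" where
  "unit_simplex = {v. (\<forall>i. 0 \<le> v $ i) \<and> (\<Sum>i\<in>UNIV. v $ i) \<le> 1}"

definition minkowski_sum :: "('a::plus) set \<Rightarrow> 'a set \<Rightarrow> 'a set" where
  "minkowski_sum A B = {x + y | x y. x \<in> A \<and> y \<in> B}"

definition C_set :: "('n::finite \<Rightarrow> nat) set \<Rightarrow> nat \<Rightarrow> nat \<Rightarrow> (real^'n) set" where
  "C_set E p q = minkowski_sum
      ((\<lambda>v. (real p / real q) *\<^sub>R v) ` newton_polytope E)
      ((\<lambda>v. (real CARD('n) - 1 / real q) *\<^sub>R v) ` unit_simplex)"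

end

(*
  NP(I) is np(I) plus the nonnegative orthant; hence C(I,r), whose second summand is
  nonnegative, lies in r NP(I).

  Conversely, a minimal generator of the real power can be written a = r c + w with
  c in np(I) and w >= 0.  Sliding c towards a vertex g of np(I) (an exponent of a minimal
  generator of I) while keeping r c <= a, we may assume that c = g or that some coordinate
  of w vanishes.  Minimality of a forces every coordinate of w below 1 (otherwise a - e_i
  would still lie in r NP(I)).  If c = g, then q w = q a - p g is integral, so each
  coordinate is at most 1 - 1/q; in the other case one coordinate is 0.  Either way the
  coordinates of w sum to at most d - 1/q, i.e. w lies in (d - 1/q) S_d.
*)
theory Submission
  imports Defs
begin

lemma emb_nth [simp]: "emb a $ i = real (a i)"
  by (simp add: emb_def)

lemma min_gens_below:
  fixes E :: "('n::finite \<Rightarrow> nat) set"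
  assumes "b \<in> E"
  obtains a where "a \<in> min_gens E" and "a \<le> b"
proof -
  obtain a where a: "a \<in> E" "a \<le> b"
    and least: "\<And>y. y \<in> E \<Longrightarrow> y \<le> b \<Longrightarrow> sum a UNIV \<le> sum y UNIV"
    using ex_has_least_nat[of "\<lambda>x. x \<in> E \<and> x \<le> b" b "\<lambda>x. sum x UNIV"] assms by auto
  have "y = a" if "y \<in> E" "y \<le> a" for y
  proof (rule ccontr)
    assume "y \<noteq> a"
    with \<open>y \<le> a\<close> have "sum y UNIV < sum a UNIV"
      by (intro sum_strict_mono_ex1) (auto simp: le_fun_def order_less_le)
    moreover have "sum a UNIV \<le> sum y UNIV"
      using least that a order_trans by blast
    ultimately show False by simp
  qed
  with a show thesis by (intro that) (auto simp: min_gens_def)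
qed

lemma monomial_ideal_gen_ideal: "monomial_ideal (gen_ideal S)"
  by (auto simp: monomial_ideal_def gen_ideal_def intro: order_trans)

lemma min_gens_gen_ideal_subset: "min_gens (gen_ideal S) \<subseteq> S"
proof
  fix a assume a: "a \<in> min_gens (gen_ideal S)"
  then obtain b where "b \<in> S" "b \<le> a"
    by (auto simp: min_gens_def gen_ideal_def)
  moreover from this have "b \<in> gen_ideal S"
    by (auto simp: gen_ideal_def)
  ultimately show "a \<in> S"
    using a by (auto simp: min_gens_def)
qed

lemma monomial_ideal_eq_gen_idealI:
  fixes E :: "('n::finite \<Rightarrow> nat) set"
  assumes "monomial_ideal E" and "min_gens E \<subseteq> S" and "S \<subseteq> E"
  shows "E = gen_ideal S"
proof
  show "E \<subseteq> gen_ideal S"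
  proof
    fix b assume "b \<in> E"
    then obtain a where "a \<in> min_gens E" "a \<le> b" by (rule min_gens_below)
    with assms(2) show "b \<in> gen_ideal S" by (auto simp: gen_ideal_def)
  qed
  show "gen_ideal S \<subseteq> E"
    using assms(1,3) by (auto simp: monomial_ideal_def gen_ideal_def)
qed

lemma monomial_ideal_real_power: "monomial_ideal (real_power I r)"
  by (simp add: real_power_def monomial_ideal_gen_ideal)

lemma convex_nonneg_orthant: "convex {x :: real^'n::finite. 0 \<le> x}"
  by (auto simp: convex_def less_eq_vec_def)

lemma convex_hull_emb_nonneg:
  assumes "c \<in> convex hull (emb ` S)"
  shows "0 \<le> c"
proof -
  have "convex hull (emb ` S) \<subseteq> {x. 0 \<le> x}"
    by (intro hull_minimal convex_nonneg_orthant) (auto simp: less_eq_vec_def)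
  with assms show ?thesis by blast
qed

lemma closed_segment_tight_point_below:
  fixes c z A :: "real^'n::finite"
  assumes cA: "c \<le> A"
  obtains c' where "c' \<in> closed_segment c z" and "c' \<le> A" and "c' = z \<or> (\<exists>i. c' $ i = A $ i)"
proof (cases "z \<le> A")
  case True
  then show ?thesis by (intro that[of z]) auto
next
  case False
  define J where "J = {i. A $ i < z $ i}"
  define t where "t i = (A $ i - c $ i) / (z $ i - c $ i)" for i
  \<comment> \<open>the parameter at which the segment leaves \<open>{x. x \<le> A}\<close>\<close>
  define t0 where "t0 = Min (t ` J)"
  have "J \<noteq> {}" using False by (auto simp: J_def less_eq_vec_def not_le)
  then have "t0 \<in> t ` J"
    unfolding t0_def by (intro Min_in) auto
  then obtain i0 where i0: "i0 \<in> J" "t0 = t i0" by blast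
  have t0_le: "t0 \<le> t i" if "i \<in> J" for i
    unfolding t0_def using that by simp
  have gap: "z $ i - c $ i > 0" if "i \<in> J" for i
    using that cA by (auto simp: J_def less_eq_vec_def intro: order_le_less_trans)
  have "0 \<le> t0" and "t0 \<le> 1"
    using i0 gap[OF i0(1)] cA by (simp_all add: t_def J_def less_eq_vec_def)
  define c' where "c' = (1 - t0) *\<^sub>R c + t0 *\<^sub>R z"
  have c'_nth: "c' $ i = c $ i + t0 * (z $ i - c $ i)" for i
    by (simp add: c'_def algebra_simps)
  have "c' $ i \<le> A $ i" for i
  proof (cases "i \<in> J")
    case True
    have "t0 * (z $ i - c $ i) \<le> t i * (z $ i - c $ i)"
      using t0_le[OF True] gap[OF True] by (simp add: mult_right_mono)
    also have "\<dots> = A $ i - c $ i" using gap[OF True] by (simp add: t_def)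
    finally show ?thesis by (simp add: c'_nth)
  next
    case False
    then have "(1 - t0) * c $ i + t0 * z $ i \<le> (1 - t0) * A $ i + t0 * A $ i"
      using cA \<open>0 \<le> t0\<close> \<open>t0 \<le> 1\<close>
      by (intro add_mono mult_left_mono) (auto simp: J_def less_eq_vec_def)
    then show ?thesis by (simp add: c'_def algebra_simps)
  qed
  moreover have "c' \<in> closed_segment c z"
    using \<open>0 \<le> t0\<close> \<open>t0 \<le> 1\<close> by (auto simp: in_segment c'_def)
  moreover have "c' $ i0 = A $ i0"
    using gap[OF i0(1)] by (simp add: c'_nth i0(2) t_def)
  ultimately show ?thesis by (intro that) (auto simp: less_eq_vec_def)
qed

lemma scaleR_unit_simplex_nonneg: "0 \<le> s \<Longrightarrow> u \<in> unit_simplex \<Longrightarrow> 0 \<le> s *\<^sub>R u"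
  by (simp add: unit_simplex_def less_eq_vec_def)

lemma nonneg_in_scaled_unit_simplex:
  fixes w :: "real^'n::finite"
  assumes s: "0 \<le> s" and w: "0 \<le> w" and w_sum: "(\<Sum>i\<in>UNIV. w $ i) \<le> s"
  shows "w \<in> (\<lambda>v. s *\<^sub>R v) ` unit_simplex"
proof (cases "s = 0")
  case True
  with w w_sum have "(\<Sum>i\<in>UNIV. w $ i) = 0"
    by (simp add: order_antisym sum_nonneg less_eq_vec_def)
  then have "w = 0"
    using w by (simp add: vec_eq_iff less_eq_vec_def sum_nonneg_eq_0_iff)
  moreover have "0 \<in> unit_simplex" by (simp add: unit_simplex_def)
  ultimately show ?thesis using True by (auto intro!: image_eqI[of _ _ 0])
next
  case False
  with s have "(1 / s) *\<^sub>R w \<in> unit_simplex"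
    using w w_sum by (simp add: unit_simplex_def less_eq_vec_def sum_divide_distrib[symmetric])
  moreover have "w = s *\<^sub>R ((1 / s) *\<^sub>R w)" using False by simp
  ultimately show ?thesis by blast
qed

lemma sum_le_card_minus_one_of_lt_one_zero:
  fixes w :: "real^'n::finite"
  assumes "\<forall>i. w $ i < 1" and "w $ j = 0"
  shows "(\<Sum>i\<in>UNIV. w $ i) \<le> real CARD('n) - 1"
proof -
  have "(\<Sum>i\<in>UNIV. w $ i) = (\<Sum>i\<in>UNIV - {j}. w $ i)"
    using sum.remove[of UNIV j "\<lambda>i. w $ i"] assms(2) by simp
  also have "\<dots> \<le> of_nat (card (UNIV - {j} :: 'n set)) * 1"
    using assms(1) by (intro sum_bounded_above) (simp add: less_imp_le)
  also have "\<dots> = real CARD('n) - 1"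
    by (simp add: card_Diff_singleton)
  finally show ?thesis .
qed

lemma sum_le_card_mult_of_lt_one_Ints:
  fixes w :: "real^'n::finite"
  assumes q: "0 < q" and "\<forall>i. w $ i < 1" and "\<forall>i. real q * w $ i \<in> \<int>"
  shows "(\<Sum>i\<in>UNIV. w $ i) \<le> real CARD('n) * (1 - 1 / real q)"
proof -
  have "w $ i \<le> 1 - 1 / real q" for i
  proof -
    obtain k where k: "real q * w $ i = of_int k"
      using assms(3) by (auto elim: Ints_cases)
    moreover have "real q * w $ i < of_int (int q)"
      using assms(2) q by simp
    ultimately have "k \<le> int q - 1"
      by simp
    then have "real q * w $ i \<le> real q - 1"
      using k by (metis of_int_diff of_int_le_iff of_int_of_nat_eq of_int_1)
    then show ?thesis using q by (simp add: field_simps)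
  qed
  then have "(\<Sum>i\<in>UNIV. w $ i) \<le> (\<Sum>i\<in>(UNIV :: 'n set). 1 - 1 / real q)"
    by (intro sum_mono)
  then show ?thesis by simp
qed

lemma card_minus_inverse_nonneg: "0 < q \<Longrightarrow> 0 \<le> real CARD('n::finite) - 1 / real q"
proof -
  assume "0 < q"
  then have "1 / real q \<le> 1" by simp
  moreover have "1 \<le> real CARD('n)" by simp
  ultimately show ?thesis by linarith
qed

lemma emb_plus_nonneg_in_NP:
  fixes I :: "('n::finite \<Rightarrow> nat) set"
  assumes I: "monomial_ideal I" and g: "g \<in> I" and v: "0 \<le> v"
  shows "emb g + v \<in> NP I"
proof -
  define M where "M = (\<Sum>i\<in>UNIV. v $ i)"
  have cvx: "convex (NP I)" by (simp add: NP_def)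
  have g_NP: "emb g \<in> NP I" using g by (simp add: NP_def hull_inc)
  have v_nonneg: "0 \<le> v $ i" for i using v by (simp add: less_eq_vec_def)
  show ?thesis
  proof (cases "M = 0")
    case True
    then have "v = 0"
      using v_nonneg by (simp add: M_def vec_eq_iff sum_nonneg_eq_0_iff)
    then show ?thesis using g_NP by simp
  next
    case False
    then have "M > 0" using v_nonneg by (simp add: M_def order_less_le sum_nonneg)
    define N where "N = nat \<lceil>M\<rceil>"
    have "M \<le> real N" unfolding N_def by (rule real_nat_ceiling_ge)
    define h where "h i = g (i := g i + N)" for i
    have h_NP: "emb (h i) \<in> NP I" for i
      using I g by (auto simp: monomial_ideal_def h_def le_fun_def NP_def intro!: hull_inc)
    have h_emb: "emb (h i) = emb g + real N *\<^sub>R axis i 1" for i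
      by (simp add: vec_eq_iff h_def axis_def)
    \<comment> \<open>the points \<open>g + N e\<^sub>i\<close> span a simplex containing \<open>g + (N/M) v\<close>\<close>
    define p where "p = (\<Sum>i\<in>UNIV. (v $ i / M) *\<^sub>R emb (h i))"
    have "p \<in> NP I"
      unfolding p_def
    proof (rule convex_sum[OF _ cvx])
      show "(\<Sum>i\<in>UNIV. v $ i / M) = 1"
        using \<open>M > 0\<close> by (simp add: M_def sum_divide_distrib[symmetric])
    qed (use v_nonneg \<open>M > 0\<close> h_NP in auto)
    moreover have p_eq: "p = emb g + (real N / M) *\<^sub>R v"
      using \<open>M > 0\<close> unfolding p_def h_emb M_def
      by (simp add: vec_eq_iff axis_def algebra_simps sum.distrib sum_divide_distrib[symmetric]
          sum_distrib_right[symmetric] if_distrib cong: if_cong)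
    ultimately have "(1 - M / real N) *\<^sub>R emb g + (M / real N) *\<^sub>R p \<in> NP I"
      using \<open>M > 0\<close> \<open>M \<le> real N\<close> by (intro convexD[OF cvx g_NP]) auto
    also have "(1 - M / real N) *\<^sub>R emb g + (M / real N) *\<^sub>R p = emb g + v"
      using p_eq \<open>M > 0\<close> \<open>M \<le> real N\<close> by (simp add: algebra_simps)
    finally show ?thesis .
  qed
qed

lemma NP_subset_newton_polytope_plus_orthant:
  fixes I :: "('n::finite \<Rightarrow> nat) set"
  shows "NP I \<subseteq> newton_polytope I + {v. 0 \<le> v}"
  unfolding NP_def
proof (rule hull_minimal)
  show "emb ` I \<subseteq> newton_polytope I + {v. 0 \<le> v}"
  proof
    fix y assume "y \<in> emb ` I"
    then obtain b where "b \<in> I" and y: "y = emb b" by blast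
    from \<open>b \<in> I\<close> obtain a where a: "a \<in> min_gens I" "a \<le> b" by (rule min_gens_below)
    then have "emb a \<in> newton_polytope I"
      by (simp add: newton_polytope_def hull_inc)
    moreover have "0 \<le> emb b - emb a"
      using a(2) by (simp add: less_eq_vec_def le_fun_def)
    ultimately have "emb a + (emb b - emb a) \<in> newton_polytope I + {v. 0 \<le> v}"
      by (intro set_plus_intro) auto
    then show "y \<in> newton_polytope I + {v. 0 \<le> v}" by (simp add: y)
  qed
  show "convex (newton_polytope I + {v. 0 \<le> v})"
    by (simp add: convex_set_plus convex_nonneg_orthant newton_polytope_def)
qed

lemma newton_polytope_plus_orthant_subset_NP:
  fixes I :: "('n::finite \<Rightarrow> nat) set"
  assumes I: "monomial_ideal I"
  shows "newton_polytope I + {v. 0 \<le> v} \<subseteq> NP I"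
proof
  fix y assume "y \<in> newton_polytope I + {v. 0 \<le> v}"
  then obtain c v where c: "c \<in> newton_polytope I" and v: "0 \<le> v" and y: "y = c + v"
    by (auto simp: set_plus_def)
  have "convex {c. c + v \<in> NP I}"
  proof (rule convexI)
    fix c1 c2 and u1 u2 :: real
    assume "c1 \<in> {c. c + v \<in> NP I}" "c2 \<in> {c. c + v \<in> NP I}" "0 \<le> u1" "0 \<le> u2" "u1 + u2 = 1"
    then have "u1 *\<^sub>R (c1 + v) + u2 *\<^sub>R (c2 + v) \<in> NP I"
      by (intro convexD) (auto simp: NP_def)
    also have "u1 *\<^sub>R (c1 + v) + u2 *\<^sub>R (c2 + v) = u1 *\<^sub>R c1 + u2 *\<^sub>R c2 + v"
      using \<open>u1 + u2 = 1\<close> by (simp add: algebra_simps flip: scaleR_add_left)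
    finally show "u1 *\<^sub>R c1 + u2 *\<^sub>R c2 \<in> {c. c + v \<in> NP I}" by simp
  qed
  moreover have "emb ` min_gens I \<subseteq> {c. c + v \<in> NP I}"
    using emb_plus_nonneg_in_NP[OF I _ v] by (auto simp: min_gens_def)
  ultimately have "newton_polytope I \<subseteq> {c. c + v \<in> NP I}"
    unfolding newton_polytope_def by (intro hull_minimal)
  with c y show "y \<in> NP I" by blast
qed

lemma NP_eq_newton_polytope_plus_orthant:
  fixes I :: "('n::finite \<Rightarrow> nat) set"
  assumes "monomial_ideal I"
  shows "NP I = newton_polytope I + {v. 0 \<le> v}"
  using NP_subset_newton_polytope_plus_orthant newton_polytope_plus_orthant_subset_NP[OF assms]
  by (rule subset_antisym)

lemma scaled_newton_polytope_plus_nonneg_in_NP: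
  fixes I :: "('n::finite \<Rightarrow> nat) set"
  assumes I: "monomial_ideal I" and x: "x \<in> newton_polytope I" and v: "0 \<le> v" and r: "0 < r"
  shows "r *\<^sub>R x + v \<in> (\<lambda>y. r *\<^sub>R y) ` NP I"
proof -
  have "0 \<le> (1 / r) *\<^sub>R v"
    using v r by (simp add: less_eq_vec_def)
  with x have "x + (1 / r) *\<^sub>R v \<in> NP I"
    by (auto simp: NP_eq_newton_polytope_plus_orthant[OF I] set_plus_def)
  moreover have "r *\<^sub>R x + v = r *\<^sub>R (x + (1 / r) *\<^sub>R v)"
    using r by (simp add: algebra_simps)
  ultimately show ?thesis by blast
qed

lemma min_gens_real_power_residual_lt_one:
  fixes I :: "('n::finite \<Rightarrow> nat) set"
  assumes I: "monomial_ideal I" and r: "0 < r"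
    and a: "a \<in> min_gens (real_power I r)"
    and x: "x \<in> newton_polytope I" and below: "r *\<^sub>R x \<le> emb a"
  shows "(emb a - r *\<^sub>R x) $ i < 1"
proof (rule ccontr)
  define w where "w = emb a - r *\<^sub>R x"
  assume "\<not> w $ i < 1"
  then have w_i: "1 \<le> w $ i" by simp
  have "0 \<le> x"
    using x by (intro convex_hull_emb_nonneg) (simp add: newton_polytope_def)
  then have "0 \<le> r *\<^sub>R x"
    using r by (simp add: less_eq_vec_def)
  then have "w $ i \<le> real (a i)"
    by (simp add: w_def less_eq_vec_def)
  with w_i have "1 \<le> real (a i)" by linarith
  then have "1 \<le> a i" by simp
  define a' where "a' = a (i := a i - 1)"
  have "0 \<le> w - axis i 1"
    using below w_i by (simp add: w_def less_eq_vec_def axis_def)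
  moreover have "emb a' = r *\<^sub>R x + (w - axis i 1)"
    using \<open>1 \<le> a i\<close> by (simp add: vec_eq_iff a'_def w_def axis_def)
  ultimately have "emb a' \<in> (\<lambda>y. r *\<^sub>R y) ` NP I"
    using scaled_newton_polytope_plus_nonneg_in_NP[OF I x _ r] by simp
  then have "a' \<in> real_power I r"
    by (auto simp: real_power_def gen_ideal_def)
  moreover have "a' \<le> a" and "a' \<noteq> a"
    using \<open>1 \<le> a i\<close> by (auto simp: a'_def le_fun_def fun_eq_iff)
  ultimately show False
    using a by (auto simp: min_gens_def)
qed

lemma C_set_subset_real_power:
  fixes I :: "('n::finite \<Rightarrow> nat) set"
  assumes I: "monomial_ideal I" and p: "0 < p" and q: "0 < q"
  shows "{a. emb a \<in> C_set I p q} \<subseteq> real_power I (real p / real q)"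
proof
  fix a assume "a \<in> {a. emb a \<in> C_set I p q}"
  then obtain x u where x: "x \<in> newton_polytope I" and u: "u \<in> unit_simplex"
    and a: "emb a = (real p / real q) *\<^sub>R x + (real CARD('n) - 1 / real q) *\<^sub>R u"
    by (auto simp: C_set_def minkowski_sum_def)
  from card_minus_inverse_nonneg[OF q] u have "0 \<le> (real CARD('n) - 1 / real q) *\<^sub>R u"
    by (rule scaleR_unit_simplex_nonneg)
  then have "emb a \<in> (\<lambda>y. (real p / real q) *\<^sub>R y) ` NP I"
    unfolding a using scaled_newton_polytope_plus_nonneg_in_NP[OF I x] p q by simp
  then show "a \<in> real_power I (real p / real q)"
    by (auto simp: real_power_def gen_ideal_def)
qed

lemma scaled_NP_tight_point_below:
  fixes I :: "('n::finite \<Rightarrow> nat) set"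
  assumes I: "monomial_ideal I" and r: "0 < r" and z: "z \<in> (\<lambda>y. r *\<^sub>R y) ` NP I"
  obtains x where "x \<in> newton_polytope I" and "r *\<^sub>R x \<le> z"
    and "(\<exists>g\<in>min_gens I. x = emb g) \<or> (\<exists>j. (r *\<^sub>R x) $ j = z $ j)"
proof -
  from z obtain y where "y \<in> NP I" and z_eq: "z = r *\<^sub>R y" by blast
  then obtain c v where c: "c \<in> newton_polytope I" and "0 \<le> v" and "y = c + v"
    unfolding NP_eq_newton_polytope_plus_orthant[OF I] by (auto elim: set_plus_elim)
  then have c_below: "r *\<^sub>R c \<le> z"
    using r z_eq by (simp add: less_eq_vec_def algebra_simps)
  have "min_gens I \<noteq> {}"
    using c by (auto simp: newton_polytope_def)
  then obtain g where g: "g \<in> min_gens I" by blast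
  obtain c' where c'_seg: "c' \<in> closed_segment (r *\<^sub>R c) (r *\<^sub>R emb g)" and "c' \<le> z"
    and c'_tight: "c' = r *\<^sub>R emb g \<or> (\<exists>j. c' $ j = z $ j)"
    using closed_segment_tight_point_below[OF c_below] by blast
  have "convex ((\<lambda>y. r *\<^sub>R y) ` newton_polytope I)"
    by (simp add: convex_scaling newton_polytope_def)
  moreover have "r *\<^sub>R emb g \<in> (\<lambda>y. r *\<^sub>R y) ` newton_polytope I"
    using g by (intro imageI) (simp add: newton_polytope_def hull_inc)
  ultimately have "c' \<in> (\<lambda>y. r *\<^sub>R y) ` newton_polytope I"
    using c c'_seg by (meson convex_contains_segment imageI subsetD)
  then obtain x where x: "x \<in> newton_polytope I" and c': "c' = r *\<^sub>R x" by blast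
  show thesis
  proof (rule that[OF x])
    show "r *\<^sub>R x \<le> z" using \<open>c' \<le> z\<close> by (simp add: c')
    show "(\<exists>g\<in>min_gens I. x = emb g) \<or> (\<exists>j. (r *\<^sub>R x) $ j = z $ j)"
      using c'_tight g r by (auto simp: c')
  qed
qed

lemma min_gens_real_power_subset_C_set:
  fixes I :: "('n::finite \<Rightarrow> nat) set"
  assumes I: "monomial_ideal I" and p: "0 < p" and q: "0 < q"
  shows "min_gens (real_power I (real p / real q)) \<subseteq> {a. emb a \<in> C_set I p q}"
proof
  define r where "r = real p / real q"
  define s where "s = real CARD('n) - 1 / real q"
  have r: "0 < r" using p q by (simp add: r_def)
  fix a assume a: "a \<in> min_gens (real_power I (real p / real q))"
  then have "emb a \<in> (\<lambda>y. r *\<^sub>R y) ` NP I"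
    using min_gens_gen_ideal_subset unfolding real_power_def r_def by blast
  then obtain x where x: "x \<in> newton_polytope I" and below: "r *\<^sub>R x \<le> emb a"
    and tight: "(\<exists>g\<in>min_gens I. x = emb g) \<or> (\<exists>j. (r *\<^sub>R x) $ j = emb a $ j)"
    using scaled_NP_tight_point_below[OF I r] by blast
  define w where "w = emb a - r *\<^sub>R x"
  have "0 \<le> w" using below by (simp add: w_def)
  have w_lt: "\<forall>i. w $ i < 1"
    using min_gens_real_power_residual_lt_one[OF I r _ x below] a by (simp add: w_def r_def)
  have "(\<Sum>i\<in>UNIV. w $ i) \<le> s"
    using tight
  proof
    assume "\<exists>g\<in>min_gens I. x = emb g"
    then obtain g where "x = emb g" by blast
    then have "real q * w $ i = of_int (int (q * a i) - int (p * g i))" for i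
      using q by (simp add: w_def r_def field_simps)
    then have "(\<Sum>i\<in>UNIV. w $ i) \<le> real CARD('n) * (1 - 1 / real q)"
      using sum_le_card_mult_of_lt_one_Ints[OF q w_lt] by simp
    also have "\<dots> \<le> s"
      by (simp add: s_def algebra_simps divide_right_mono)
    finally show ?thesis .
  next
    assume "\<exists>j. (r *\<^sub>R x) $ j = emb a $ j"
    then obtain j where "(r *\<^sub>R x) $ j = emb a $ j" ..
    then have "w $ j = 0" by (simp add: w_def)
    then have "(\<Sum>i\<in>UNIV. w $ i) \<le> real CARD('n) - 1"
      using sum_le_card_minus_one_of_lt_one_zero w_lt by blast
    also have "\<dots> \<le> s"
      using q by (simp add: s_def)
    finally show ?thesis .
  qed
  with card_minus_inverse_nonneg[OF q] \<open>0 \<le> w\<close> have "w \<in> (\<lambda>v. s *\<^sub>R v) ` unit_simplex"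
    unfolding s_def by (rule nonneg_in_scaled_unit_simplex)
  moreover have "emb a = r *\<^sub>R x + w" by (simp add: w_def)
  ultimately show "a \<in> {a. emb a \<in> C_set I p q}"
    using x unfolding C_set_def minkowski_sum_def r_def [symmetric] s_def [symmetric] by blast
qed

theorem theorem3p5:
  fixes I :: "('n::finite \<Rightarrow> nat) set" and p q :: nat
  assumes "monomial_ideal I" and "0 < p" and "0 < q"
  shows "(\<forall>a \<in> min_gens (real_power I (real p / real q)). emb a \<in> C_set I p q)
       \<and> (\<forall>a. emb a \<in> C_set I p q \<longrightarrow> a \<in> real_power I (real p / real q))
       \<and> real_power I (real p / real q) = gen_ideal {a. emb a \<in> C_set I p q}"
proof -
  have min_gens_in_C: "min_gens (real_power I (real p / real q)) \<subseteq> {a. emb a \<in> C_set I p q}"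
    using assms by (rule min_gens_real_power_subset_C_set)
  moreover have C_in_power: "{a. emb a \<in> C_set I p q} \<subseteq> real_power I (real p / real q)"
    using assms by (rule C_set_subset_real_power)
  moreover have "real_power I (real p / real q) = gen_ideal {a. emb a \<in> C_set I p q}"
    using monomial_ideal_real_power min_gens_in_C C_in_power by (rule monomial_ideal_eq_gen_idealI)
  ultimately show ?thesis by blast
qed

end
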